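(* Let $X,Y,Z$ be random variables on finite alphabets $\mathcal{X},\mathcal{Y},\mathcal{Z}$ with a given joint distribution. For each $y\in\mathcal{Y}$ with $\Pr(Y=y)>0$, let $(A_y,B_y,C_y)$ be the random triple on $\mathcal{X}\times\mathcal{Y}\times\mathcal{Z}$ defined by $$\Pr(A_y=x,B_y=y',C_y=z)=\begin{cases}0 & \text{if } \Pr(Z=z)=0,\\ \dfrac{\Pr(X=x,Y=y',Z=z)\,\Pr(Z=z\mid Y=y)}{\Pr(Z=z)} & \text{otherwise.}\end{cases}$$ Then $$H(X\mid Z)=\sum_{y\in\mathcal{Y},\,\Pr(Y=y)>0}\Pr(Y=y)\,H(A_y\mid C_y).$$
   Context: $H$ denotes Shannon entropy. The triple $(A_y,B_y,C_y)$ is the paper's "do-operation" applied to the joint distribution of $(X,Y,Z)$ with the distribution of $Z$ given $Y=y$ as the new target marginal. *)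

theory Defs
  imports "HOL-Probability.Probability_Mass_Function"
begin

definition marg_Y :: "('x::finite \<times> 'y::finite \<times> 'z::finite) pmf \<Rightarrow> 'y \<Rightarrow> real" where
  "marg_Y P y = (\<Sum>x\<in>UNIV. \<Sum>z\<in>UNIV. pmf P (x, y, z))"

definition marg_Z :: "('x::finite \<times> 'y::finite \<times> 'z::finite) pmf \<Rightarrow> 'z \<Rightarrow> real" where
  "marg_Z P z = (\<Sum>x\<in>UNIV. \<Sum>y\<in>UNIV. pmf P (x, y, z))"

definition marg_YZ :: "('x::finite \<times> 'y::finite \<times> 'z::finite) pmf \<Rightarrow> 'y \<Rightarrow> 'z \<Rightarrow> real" where
  "marg_YZ P y z = (\<Sum>x\<in>UNIV. pmf P (x, y, z))"

definition marg_XZ :: "('x::finite \<times> 'y::finite \<times> 'z::finite) pmf \<Rightarrow> 'x \<Rightarrow> 'z \<Rightarrow> real" where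
  "marg_XZ P x z = (\<Sum>y\<in>UNIV. pmf P (x, y, z))"

definition cond_entropy :: "('a::finite \<Rightarrow> 'c::finite \<Rightarrow> real) \<Rightarrow> real" where
  "cond_entropy f = - (\<Sum>a\<in>UNIV. \<Sum>c\<in>UNIV. if f a c = 0 then 0
                          else f a c * log 2 (f a c / (\<Sum>a'\<in>UNIV. f a' c)))"

definition do_op :: "('x::finite \<times> 'y::finite \<times> 'z::finite) pmf \<Rightarrow> 'y \<Rightarrow> 'x \<Rightarrow> 'y \<Rightarrow> 'z \<Rightarrow> real" where
  "do_op P y x y' z = (if marg_Z P z = 0 then 0
      else pmf P (x, y', z) * (marg_YZ P y z / marg_Y P y) / marg_Z P z)"

end

theory Submission
  imports Defs
begin

text \<open>The do-operation keeps the conditional law of X given Z and only replaces the law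
  of Z by that of Z given Y = y. Hence H(A_y|C_y) = sum_z P(z|y) H(X|Z=z), and averaging over y
  turns the weights P(z|y) into P(z), giving sum_z P(z) H(X|Z=z) = H(X|Z).\<close>

definition marginal_snd :: "('a::finite \<Rightarrow> 'c \<Rightarrow> real) \<Rightarrow> 'c \<Rightarrow> real" where
  "marginal_snd f c = (\<Sum>a\<in>UNIV. f a c)"

definition cond_entropy_given :: "('a::finite \<Rightarrow> 'c \<Rightarrow> real) \<Rightarrow> 'c \<Rightarrow> real" where
  "cond_entropy_given f c = - (\<Sum>a\<in>UNIV. if f a c = 0 then 0
      else f a c / marginal_snd f c * log 2 (f a c / marginal_snd f c))"

definition reweight :: "('a::finite \<Rightarrow> 'c \<Rightarrow> real) \<Rightarrow> ('c \<Rightarrow> real) \<Rightarrow> 'a \<Rightarrow> 'c \<Rightarrow> real" where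
  "reweight f t a c = (if marginal_snd f c = 0 then 0 else f a c * t c / marginal_snd f c)"

lemma cond_entropy_given_marginal_zero:
  "marginal_snd f c = 0 \<Longrightarrow> cond_entropy_given f c = 0"
  by (simp add: cond_entropy_given_def cong: if_cong)

text \<open>No sign condition is needed: a column with zero marginal contributes
  f a c * log 2 (f a c / 0) = f a c * log 2 0 = 0 on the left.\<close>
lemma cond_entropy_eq_sum_given:
  "cond_entropy f = (\<Sum>c\<in>UNIV. marginal_snd f c * cond_entropy_given f c)"
proof -
  have column: "- (\<Sum>a\<in>UNIV. if f a c = 0 then 0 else f a c * log 2 (f a c / marginal_snd f c))
      = marginal_snd f c * cond_entropy_given f c" for c
  proof (cases "marginal_snd f c = 0")
    case True
    then show ?thesis
      by (simp add: log_def cong: if_cong)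
  next
    case False
    then show ?thesis
      unfolding cond_entropy_given_def mult_minus_right sum_distrib_left
      by (intro arg_cong[where f = uminus] sum.cong) auto
  qed
  have "cond_entropy f = (\<Sum>c\<in>UNIV. - (\<Sum>a\<in>UNIV. if f a c = 0 then 0
      else f a c * log 2 (f a c / marginal_snd f c)))"
    unfolding cond_entropy_def marginal_snd_def sum_negf by (subst sum.swap) (rule refl)
  then show ?thesis
    by (simp only: column)
qed

lemma marginal_snd_reweight:
  "marginal_snd (reweight f t) c = (if marginal_snd f c = 0 then 0 else t c)"
  by (simp add: reweight_def marginal_snd_def sum_divide_distrib[symmetric]
      sum_distrib_right[symmetric])

lemma cond_entropy_given_reweight:
  assumes "t c \<noteq> 0"
  shows "cond_entropy_given (reweight f t) c = cond_entropy_given f c"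
proof (cases "marginal_snd f c = 0")
  case True
  then show ?thesis
    by (simp add: cond_entropy_given_marginal_zero marginal_snd_reweight)
next
  case False
  have marginal: "marginal_snd (reweight f t) c = t c"
    using False by (simp add: marginal_snd_reweight)
  have ratio: "reweight f t a c / t c = f a c / marginal_snd f c" for a
    using False assms by (simp add: reweight_def)
  have "reweight f t a c = 0 \<longleftrightarrow> f a c = 0" for a
    using False assms by (simp add: reweight_def)
  then show ?thesis
    unfolding cond_entropy_given_def marginal ratio by simp
qed

lemma cond_entropy_reweight:
  "cond_entropy (reweight f t) = (\<Sum>c\<in>UNIV. t c * cond_entropy_given f c)"
  unfolding cond_entropy_eq_sum_given
proof (rule sum.cong)
  fix c
  show "marginal_snd (reweight f t) c * cond_entropy_given (reweight f t) c
      = t c * cond_entropy_given f c"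
    by (cases "t c = 0")
      (auto simp: marginal_snd_reweight cond_entropy_given_reweight
        cond_entropy_given_marginal_zero)
qed simp

lemma marginal_snd_marg_XZ: "marginal_snd (marg_XZ P) = marg_Z P"
  by (simp add: fun_eq_iff marginal_snd_def marg_XZ_def marg_Z_def)

lemma sum_do_op_eq_reweight:
  "(\<lambda>x z. \<Sum>y'\<in>UNIV. do_op P y x y' z)
    = reweight (marg_XZ P) (\<lambda>z. marg_YZ P y z / marg_Y P y)"
  by (simp add: fun_eq_iff do_op_def reweight_def marginal_snd_marg_XZ marg_XZ_def
      sum_divide_distrib sum_distrib_right)

lemma marg_Y_eq_sum_marg_YZ: "marg_Y P y = (\<Sum>z\<in>UNIV. marg_YZ P y z)"
  unfolding marg_Y_def marg_YZ_def by (rule sum.swap)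

lemma marg_Z_eq_sum_marg_YZ: "marg_Z P z = (\<Sum>y\<in>UNIV. marg_YZ P y z)"
  unfolding marg_Z_def marg_YZ_def by (rule sum.swap)

lemma marg_YZ_nonneg: "marg_YZ P y z \<ge> 0"
  by (simp add: marg_YZ_def sum_nonneg)

lemma marg_YZ_eq_zero:
  assumes "\<not> marg_Y P y > 0"
  shows "marg_YZ P y z = 0"
proof -
  have "marg_YZ P y z \<le> marg_Y P y"
    unfolding marg_Y_eq_sum_marg_YZ by (rule member_le_sum) (simp_all add: marg_YZ_nonneg)
  then show ?thesis
    using assms marg_YZ_nonneg[of P y z] by linarith
qed

lemma sum_support_marg_YZ:
  "(\<Sum>y\<in>{y. marg_Y P y > 0}. marg_YZ P y z) = marg_Z P z"
  unfolding marg_Z_eq_sum_marg_YZ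
  by (rule sum.mono_neutral_left) (auto simp: marg_YZ_eq_zero)

theorem lemma1:
  fixes P :: "('x::finite \<times> 'y::finite \<times> 'z::finite) pmf"
  shows "cond_entropy (marg_XZ P) =
    (\<Sum>y\<in>{y. marg_Y P y > 0}. marg_Y P y * cond_entropy (\<lambda>x z. \<Sum>y'\<in>UNIV. do_op P y x y' z))"
proof -
  let ?S = "{y. marg_Y P y > 0}"
  let ?H = "cond_entropy_given (marg_XZ P)"
  have weighted: "marg_Y P y * cond_entropy (\<lambda>x z. \<Sum>y'\<in>UNIV. do_op P y x y' z)
      = (\<Sum>z\<in>UNIV. marg_YZ P y z * ?H z)" if "y \<in> ?S" for y
  proof -
    have "cond_entropy (\<lambda>x z. \<Sum>y'\<in>UNIV. do_op P y x y' z)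
        = (\<Sum>z\<in>UNIV. marg_YZ P y z / marg_Y P y * ?H z)"
      by (simp only: sum_do_op_eq_reweight cond_entropy_reweight)
    then show ?thesis
      using that by (simp add: sum_distrib_left)
  qed
  have "(\<Sum>y\<in>?S. marg_Y P y * cond_entropy (\<lambda>x z. \<Sum>y'\<in>UNIV. do_op P y x y' z))
      = (\<Sum>y\<in>?S. \<Sum>z\<in>UNIV. marg_YZ P y z * ?H z)"
    by (rule sum.cong) (simp_all add: weighted)
  also have "\<dots> = (\<Sum>z\<in>UNIV. (\<Sum>y\<in>?S. marg_YZ P y z) * ?H z)"
    by (subst sum.swap) (simp add: sum_distrib_right)
  also have "\<dots> = (\<Sum>z\<in>UNIV. marg_Z P z * ?H z)"
    by (simp add: sum_support_marg_YZ)
  also have "\<dots> = cond_entropy (marg_XZ P)"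
    by (simp add: cond_entropy_eq_sum_given marginal_snd_marg_XZ)
  finally show ?thesis ..
qed

end
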